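(* Let $n\ge 2$, $b>0$, $\rho=e^{2\pi i/n}$, and for $\lambda\in\mathbb{C}$ let $\zeta=\lambda^{1/n}$ denote the principal $n$-th root and $\tilde r_j(\lambda)=\exp(\rho^{j-1}\lambda^{1/n}b)$, $j=1,\dots,n$. For every $\beta\in(0,1)$ there is $\delta=\delta(\beta)>0$, with $\delta(\beta)\to0^+$ as $\beta\to0^+$, such that for all $j,k\in\{1,\dots,n\}$ and all $\lambda\in\mathbb{C}$, $$|\tilde r_k(\lambda)-\tilde r_j(\lambda)|\ge\beta\max\{|\tilde r_j(\lambda)|,|\tilde r_k(\lambda)|\}$$ provided $(\rho^{k-1}-\rho^{j-1})\zeta b\notin\bigcup_{m\in\mathbb{Z}}\{z\in\mathbb{C}:|z-2\pi i m|<\delta\}$.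
   Context: The $\tilde r_j(\lambda)$ are the Floquet multipliers of the equation $u^{(n)}=\lambda u$ with period $b$. *)

theory Defs
  imports "HOL-Analysis.Analysis"
begin

definition unit_root :: "nat \<Rightarrow> complex" where
  "unit_root n = exp (2 * of_real pi * \<i> / of_nat n)"

text \<open>Principal n-th root: exp(Ln z / n) for z nonzero, 0 for z = 0 (complex powr).\<close>
definition principal_root :: "nat \<Rightarrow> complex \<Rightarrow> complex" where
  "principal_root n z = z powr (1 / of_nat n)"

definition floquet_mult :: "nat \<Rightarrow> real \<Rightarrow> nat \<Rightarrow> complex \<Rightarrow> complex" where
  "floquet_mult n b j lam = exp (unit_root n ^ (j - 1) * principal_root n lam * of_real b)"

end

theory Submission
  imports Defs
begin

text \<open>Put w = (rho^(k-1) - rho^(j-1)) zeta b. Then r_k - r_j = r_j (e^w - 1) = - r_k (e^(-w) - 1),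
  and the distance condition on w is symmetric under w \<mapsto> -w, so it suffices that |e^w - 1| \<ge> beta
  whenever w stays delta(beta) away from 2 pi i Z. For beta < 1/2 this follows from |Ln (1 + z)| \<le> 2|z|,
  which gives delta(beta) = 2 beta; for larger beta a larger delta forces |Re w| to be so big that
  already |e^(Re w) - 1| \<ge> beta.\<close>

definition exp_sep_radius :: "real \<Rightarrow> real" where
  "exp_sep_radius \<beta> = (if \<beta> < 1/2 then 2 * \<beta> else pi + 1 - ln (1 - \<beta>))"

lemma exp_sep_radius_pos:
  assumes "0 < \<beta>" "\<beta> < 1"
  shows "exp_sep_radius \<beta> > 0"
proof -
  have "ln (1 - \<beta>) < 0" using assms by simp
  then show ?thesis
    unfolding exp_sep_radius_def using assms pi_gt_zero by (simp only: if_split) linarith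
qed

lemma exp_sep_radius_tendsto_zero: "(exp_sep_radius \<longlongrightarrow> 0) (at_right 0)"
proof -
  have "eventually (\<lambda>\<beta>. 2 * \<beta> = exp_sep_radius \<beta>) (at_right (0::real))"
    unfolding eventually_at_right_field exp_sep_radius_def
    by (rule exI[of _ "1/2"]) auto
  moreover have "((\<lambda>\<beta>::real. 2 * \<beta>) \<longlongrightarrow> 0) (at_right 0)"
    by (auto intro!: tendsto_eq_intros)
  ultimately show ?thesis
    using Lim_transform_eventually by blast
qed

lemma exp_near_one_imp_near_2pi_lattice:
  fixes w :: complex
  assumes "cmod (exp w - 1) < 1/2"
  obtains m :: int where "cmod (w - 2 * of_real pi * \<i> * of_int m) \<le> 2 * cmod (exp w - 1)"
proof -
  have "cmod (Ln (1 + (exp w - 1))) \<le> 2 * cmod (exp w - 1)"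
    using assms by (rule norm_Ln_le)
  then have Ln_le: "cmod (Ln (exp w)) \<le> 2 * cmod (exp w - 1)"
    by simp
  obtain m :: int where "w = Ln (exp w) + (of_int (2 * m) * pi) * \<i>"
    using exp_eq[of w "Ln (exp w)"] by auto
  then have "w - 2 * of_real pi * \<i> * of_int m = Ln (exp w)"
    by (simp add: algebra_simps)
  with Ln_le show ?thesis
    by (intro that[of m]) simp
qed

lemma dist_2pi_lattice_le_abs_Re_plus_pi:
  fixes w :: complex
  obtains m :: int where "cmod (w - 2 * of_real pi * \<i> * of_int m) \<le> \<bar>Re w\<bar> + pi"
proof -
  define m :: int where "m = round (Im w / (2 * pi))"
  have "\<bar>Im w / (2 * pi) - of_int m\<bar> \<le> 1/2"
    unfolding m_def using of_int_round_abs_le[of "Im w / (2 * pi)"] by (simp add: abs_minus_commute)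
  moreover have "Im w - 2 * pi * of_int m = 2 * pi * (Im w / (2 * pi) - of_int m)"
    by (simp add: field_simps)
  then have "\<bar>Im w - 2 * pi * of_int m\<bar> = 2 * pi * \<bar>Im w / (2 * pi) - of_int m\<bar>"
    by (simp add: abs_mult)
  ultimately have Im_le: "\<bar>Im w - 2 * pi * of_int m\<bar> \<le> pi"
    by simp
  have "cmod (w - 2 * of_real pi * \<i> * of_int m)
      \<le> \<bar>Re (w - 2 * of_real pi * \<i> * of_int m)\<bar> + \<bar>Im (w - 2 * of_real pi * \<i> * of_int m)\<bar>"
    by (rule cmod_le)
  also have "\<dots> \<le> \<bar>Re w\<bar> + pi"
    using Im_le by simp
  finally show ?thesis by (rule that)
qed

lemma norm_exp_minus_one_ge_Re: "\<bar>exp (Re w) - 1\<bar> \<le> cmod (exp w - 1)"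
  using norm_triangle_ineq3[of "exp w" 1] by (simp add: norm_exp_eq_Re)

lemma norm_exp_minus_one_ge:
  fixes w :: complex
  assumes "0 < \<beta>" "\<beta> < 1"
    and far: "\<And>m::int. cmod (w - 2 * of_real pi * \<i> * of_int m) \<ge> exp_sep_radius \<beta>"
  shows "cmod (exp w - 1) \<ge> \<beta>"
proof (cases "\<beta> < 1/2")
  case True
  show ?thesis
  proof (rule ccontr)
    assume "\<not> ?thesis"
    then have "cmod (exp w - 1) < \<beta>" by simp
    moreover obtain m :: int where "cmod (w - 2 * of_real pi * \<i> * of_int m) \<le> 2 * cmod (exp w - 1)"
      using exp_near_one_imp_near_2pi_lattice[of w] True calculation by auto
    moreover have "cmod (w - 2 * of_real pi * \<i> * of_int m) \<ge> 2 * \<beta>"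
      using far[of m] True unfolding exp_sep_radius_def by simp
    ultimately show False by simp
  qed
next
  case False
  obtain m :: int where "cmod (w - 2 * of_real pi * \<i> * of_int m) \<le> \<bar>Re w\<bar> + pi"
    by (rule dist_2pi_lattice_le_abs_Re_plus_pi)
  with far[of m] False have Re_large: "\<bar>Re w\<bar> \<ge> 1 - ln (1 - \<beta>)"
    unfolding exp_sep_radius_def by simp
  have "ln (1 - \<beta>) \<le> 0" using assms by simp
  show ?thesis
  proof (cases "Re w \<ge> 0")
    case True
    with Re_large \<open>ln (1 - \<beta>) \<le> 0\<close> have "exp (Re w) \<ge> exp 1"
      by simp
    moreover have "exp (1::real) \<ge> 2"
      using exp_ge_add_one_self[of 1] by simp
    ultimately show ?thesis
      using norm_exp_minus_one_ge_Re[of w] assms by linarith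
  next
    case False
    with Re_large have "exp (Re w) \<le> exp (ln (1 - \<beta>))"
      by simp
    then show ?thesis
      using norm_exp_minus_one_ge_Re[of w] assms by simp
  qed
qed

lemma norm_diff_exp_ge_max:
  fixes a c :: complex
  assumes "cmod (exp (c - a) - 1) \<ge> \<beta>" "cmod (exp (a - c) - 1) \<ge> \<beta>"
  shows "cmod (exp c - exp a) \<ge> \<beta> * max (cmod (exp a)) (cmod (exp c))"
proof -
  have "exp c - exp a = exp a * (exp (c - a) - 1)"
    by (simp add: exp_diff field_simps)
  then have "cmod (exp c - exp a) \<ge> \<beta> * cmod (exp a)"
    using assms(1) by (simp add: norm_mult mult.commute mult_left_mono)
  moreover have "exp c - exp a = - (exp c * (exp (a - c) - 1))"
    by (simp add: exp_diff field_simps)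
  then have "cmod (exp c - exp a) \<ge> \<beta> * cmod (exp c)"
    using assms(2) by (simp add: norm_mult mult.commute mult_left_mono)
  ultimately show ?thesis
    by (simp add: max_def)
qed

theorem corollary1:
  fixes n :: nat and b :: real
  assumes "n \<ge> 2" and "b > 0"
  shows "\<exists>\<delta> :: real \<Rightarrow> real.
    (\<forall>\<beta>\<in>{0<..<1}. \<delta> \<beta> > 0) \<and>
    (\<delta> \<longlongrightarrow> 0) (at_right 0) \<and>
    (\<forall>\<beta>\<in>{0<..<1}. \<forall>j\<in>{1..n}. \<forall>k\<in>{1..n}. \<forall>lam::complex.
       (\<forall>m::int. cmod ((unit_root n ^ (k - 1) - unit_root n ^ (j - 1)) * principal_root n lam * of_real b
                         - 2 * of_real pi * \<i> * of_int m) \<ge> \<delta> \<beta>)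
       \<longrightarrow> cmod (floquet_mult n b k lam - floquet_mult n b j lam)
           \<ge> \<beta> * max (cmod (floquet_mult n b j lam)) (cmod (floquet_mult n b k lam)))"
proof (intro exI[of _ exp_sep_radius] conjI ballI allI impI exp_sep_radius_tendsto_zero)
  fix \<beta> :: real assume "\<beta> \<in> {0<..<1}"
  then show "exp_sep_radius \<beta> > 0"
    by (simp add: exp_sep_radius_pos)
next
  fix \<beta> :: real and j k :: nat and lam :: complex
  assume \<beta>: "\<beta> \<in> {0<..<1}"
  define a where "a = unit_root n ^ (j - 1) * principal_root n lam * of_real b"
  define c where "c = unit_root n ^ (k - 1) * principal_root n lam * of_real b"
  assume "\<forall>m::int. cmod ((unit_root n ^ (k - 1) - unit_root n ^ (j - 1)) * principal_root n lam * of_real b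
                         - 2 * of_real pi * \<i> * of_int m) \<ge> exp_sep_radius \<beta>"
  then have far: "cmod (c - a - 2 * of_real pi * \<i> * of_int m) \<ge> exp_sep_radius \<beta>" for m :: int
    unfolding a_def c_def by (simp add: algebra_simps)
  have "cmod (a - c - 2 * of_real pi * \<i> * of_int m) \<ge> exp_sep_radius \<beta>" for m :: int
  proof -
    have "a - c - 2 * of_real pi * \<i> * of_int m = - (c - a - 2 * of_real pi * \<i> * of_int (-m))"
      by simp
    then show ?thesis
      using far[of "-m"] by (simp only: norm_minus_cancel)
  qed
  with far \<beta> have "cmod (exp c - exp a) \<ge> \<beta> * max (cmod (exp a)) (cmod (exp c))"
    by (intro norm_diff_exp_ge_max norm_exp_minus_one_ge) auto
  then show "cmod (floquet_mult n b k lam - floquet_mult n b j lam)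
           \<ge> \<beta> * max (cmod (floquet_mult n b j lam)) (cmod (floquet_mult n b k lam))"
    unfolding floquet_mult_def a_def c_def .
qed

end
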